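(* Consider the closed compartmental reaction-diffusion system on $\bar{\mathbb{R}}_+^{mN}$ $$\dot X=F^*(X):=-\big(( *_0)^{-1}\otimes I_m\big)\,\Delta_d(X)\,\frac{X}{X^*}+F(X),$$ with $\Delta_d(X)=(\mathbf{d}\otimes I_m)^{\mathrm{T}}( *_1\otimes I_m)R_d(X)(\mathbf{d}\otimes I_m)$, where all objects are as described in the context. Suppose $X:[0,t^*]\to\bar{\mathbb{R}}_+^{mN}$ is any solution of this system. Then for every $k=1,\dots,mN$: if $X_k(0)>0$ then $X_k(t^* )>0$.
   Context: Reaction network: $m$ species, $c$ complexes, $r$ reactions; $Z$ is the $m\times c$ complex stoichiometric matrix (nonnegative integer entries, column $\rho$ gives the species composition of complex $\rho$); $B$ is the $c\times r$ incidence matrix of the directed complex graph (each column has one $+1$ at the substrate complex and one $-1$ at the product complex of the reaction); $x^*\in\mathbb{R}_+^m$ (all entries strictly positive) is a thermodynamic equilibrium and $\mathcal{K}(x^* )=\mathrm{diag}(\kappa_1,\dots,\kappa_r)$ with all $\kappa_j>0$. The reaction vector field is $f(x)=-ZB\mathcal{K}(x^* )B^{\mathrm{T}}\mathrm{Exp}\big(Z^{\mathrm{T}}\mathrm{Ln}(x/x^* )\big)$, where $\mathrm{Ln}$, $\mathrm{Exp}$ act componentwise and $x/x^*$ is the componentwise quotient; since the entries of $\mathrm{Exp}(Z^{\mathrm{T}}\mathrm{Ln}(x/x^* ))$ are the monomials $\prod_i (x_i/x_i^* )^{Z_{i\rho}}$, $f$ extends to $\bar{\mathbb{R}}_+^m$.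 Spatial discretization: a simplicial triangulation $K$ of the spatial domain with $N$ vertices and $N_e$ edges; $\mathbf{d}$ is the $N_e\times N$ matrix that is the transpose of the (oriented) vertex-edge incidence matrix of the 1-skeleton of $K$; $*_0$ is an $N\times N$ positive diagonal matrix (volumes of the dual cells of the vertices) and $*_1$ an $N_e\times N_e$ positive diagonal matrix. $X=((x^1)^{\mathrm{T}},\dots,(x^N)^{\mathrm{T}})^{\mathrm{T}}$ with $x^j\in\bar{\mathbb{R}}_+^m$ the concentrations in compartment $j$, $X^*=((x^* )^{\mathrm{T}},\dots,(x^* )^{\mathrm{T}})^{\mathrm{T}}$, $X/X^*$ the componentwise quotient, $F(X)=(f(x^1)^{\mathrm{T}},\dots,f(x^N)^{\mathrm{T}})^{\mathrm{T}}$. $R_d(X)$ is an $mN_e\times mN_e$ diagonal matrix with $R_d(X)\ge\alpha I$ for some $\alpha>0$, depending continuously differentiably on $X$. $\otimes$ is the Kronecker product and $I_m$ the $m\times m$ identity. *)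

theory Defs
  imports "HOL-Analysis.Analysis"
begin

text \<open>With X stacked as
  (x^1,...,x^N), the index (j,i) (vertex j, species i) corresponds to (j-1)m+i.\<close>
definition kron :: "real^'n^'m \<Rightarrow> real^'q^'p \<Rightarrow> real^('n::finite \<times> 'q::finite)^('m::finite \<times> 'p::finite)" where
  "kron A B = (\<chi> p q. A$(fst p)$(fst q) * B$(snd p)$(snd q))"

definition diagm :: "real^'n \<Rightarrow> real^'n^'n" where
  "diagm v = (\<chi> i j. if i = j then v$i else 0)"

definition is_pos_diag :: "real^'n^'n \<Rightarrow> bool" where
  "is_pos_diag A \<longleftrightarrow> (\<forall>i j. i \<noteq> j \<longrightarrow> A$i$j = 0) \<and> (\<forall>i. A$i$i > 0)"

text \<open>Incidence matrix of a directed graph (c x r): each column has one +1 at the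
  substrate and one -1 at the (distinct) product, zeros elsewhere.\<close>
definition is_incidence_cols :: "real^'r^'c \<Rightarrow> bool" where
  "is_incidence_cols B \<longleftrightarrow> (\<forall>j. \<exists>s p. s \<noteq> p \<and> B$s$j = 1 \<and> B$p$j = -1 \<and>
      (\<forall>\<rho>. \<rho> \<noteq> s \<and> \<rho> \<noteq> p \<longrightarrow> B$\<rho>$j = 0))"

text \<open>Transpose of the oriented vertex-edge incidence matrix of the 1-skeleton of a
  simplicial complex (N_e x N): each row (edge) has one +1 and one -1 at two distinct
  vertices and zeros elsewhere; distinct edges have distinct vertex pairs.\<close>
definition edge_ends :: "real^'v^'e \<Rightarrow> 'e \<Rightarrow> 'v set" where
  "edge_ends d e = {v. d$e$v \<noteq> 0}"

definition is_skeleton_incidence :: "real^'v^'e \<Rightarrow> bool" where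
  "is_skeleton_incidence d \<longleftrightarrow>
     (\<forall>e. \<exists>u w. u \<noteq> w \<and> d$e$u = 1 \<and> d$e$w = -1 \<and>
         (\<forall>v. v \<noteq> u \<and> v \<noteq> w \<longrightarrow> d$e$v = 0)) \<and>
     (\<forall>e e'. e \<noteq> e' \<longrightarrow> edge_ends d e \<noteq> edge_ends d e')"

text \<open>Vector of monomials Exp(Z^T Ln(x/x*)), extended to the closed orthant.\<close>
definition monomials :: "nat^'c^'m \<Rightarrow> real^'m \<Rightarrow> real^'m \<Rightarrow> real^'c" where
  "monomials Z xs x = (\<chi> \<rho>. \<Prod>i\<in>UNIV. (x$i / xs$i) ^ (Z$i$\<rho>))"

definition realmat :: "nat^'c^'m \<Rightarrow> real^'c^'m" where
  "realmat Z = (\<chi> i \<rho>. real (Z$i$\<rho>))"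

definition reaction_field ::
  "nat^'c^'m \<Rightarrow> real^'r^'c \<Rightarrow> real^'r \<Rightarrow> real^'m \<Rightarrow> real^'m \<Rightarrow> real^'m" where
  "reaction_field Z B \<kappa> xs x =
     - ((realmat Z ** B ** diagm \<kappa> ** transpose B) *v monomials Z xs x)"

definition quot_star :: "real^('v::finite \<times> 'm::finite) \<Rightarrow> real^'m \<Rightarrow> real^('v::finite \<times> 'm::finite)" where
  "quot_star X xs = (\<chi> p. X$p / xs$(snd p))"

definition compartment :: "real^('v::finite \<times> 'm::finite) \<Rightarrow> 'v \<Rightarrow> real^'m" where
  "compartment X j = (\<chi> i. X$(j,i))"

definition big_F ::
  "nat^'c^'m \<Rightarrow> real^'r^'c \<Rightarrow> real^'r \<Rightarrow> real^'m \<Rightarrow> real^('v::finite \<times> 'm::finite) \<Rightarrow> real^('v::finite \<times> 'm::finite)" where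
  "big_F Z B \<kappa> xs X = (\<chi> p. reaction_field Z B \<kappa> xs (compartment X (fst p)) $ (snd p))"

definition Delta_d ::
  "real^'v^'e \<Rightarrow> real^'e^'e \<Rightarrow> real^('e::finite \<times> 'm::finite)^('e::finite \<times> 'm::finite) \<Rightarrow> real^('v::finite \<times> 'm::finite)^('v::finite \<times> 'm::finite)" where
  "Delta_d d star1 R =
     transpose (kron d (mat 1 :: real^'m^'m)) ** kron star1 (mat 1 :: real^'m^'m) ** R
       ** kron d (mat 1 :: real^'m^'m)"

definition F_star ::
  "nat^'c^'m \<Rightarrow> real^'r^'c \<Rightarrow> real^'r \<Rightarrow> real^'m \<Rightarrow> real^'v^'e \<Rightarrow> real^'v^'v \<Rightarrow> real^'e^'e
   \<Rightarrow> (real^('v::finite \<times> 'm::finite) \<Rightarrow> real^('e::finite \<times> 'm::finite)^('e::finite \<times> 'm::finite)) \<Rightarrow> real^('v::finite \<times> 'm::finite) \<Rightarrow> real^('v::finite \<times> 'm::finite)" where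
  "F_star Z B \<kappa> xs d star0 star1 Rd X =
     - ((kron (matrix_inv star0) (mat 1 :: real^'m^'m) ** Delta_d d star1 (Rd X))
          *v quot_star X xs)
     + big_F Z B \<kappa> xs X"

definition nonneg_orthant :: "(real^'k) set" where
  "nonneg_orthant = {X. \<forall>k. 0 \<le> X$k}"

end

theory Submission
  imports Defs
begin

text \<open>Both parts of the vector field can decrease a coordinate only at a rate proportional to
  that coordinate. The diffusion operator has nonpositive off-diagonal entries (it is a weighted
  graph Laplacian of the compartments), so it pushes X_k down by at most its diagonal entry
  times X_k; likewise the complex Laplacian B K B^T has nonpositive off-diagonal entries, so the
  only negative contributions to f_i come from monomials containing x_i. Hence
  F*_k(X) \<ge> -c(X) X_k with c continuous; along the compact trajectory c is bounded by some C,
  and X_k(t) exp(C t) is nondecreasing.\<close>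

lemma matrix_mul_diag_left_nth:
  fixes P :: "'a::semiring_1^'n^'n" and Q :: "'a^'k^'n"
  assumes "\<forall>a b. a \<noteq> b \<longrightarrow> P$a$b = 0"
  shows "(P ** Q)$a$b = P$a$a * Q$a$b"
proof -
  have "(P ** Q)$a$b = (\<Sum>c\<in>UNIV. P$a$c * Q$c$b)"
    by (simp add: matrix_matrix_mult_def)
  also have "\<dots> = (\<Sum>c\<in>UNIV. if c = a then P$a$a * Q$a$b else 0)"
    by (rule sum.cong) (use assms in auto)
  finally show ?thesis by simp
qed

lemma matrix_inv_unique:
  fixes A B :: "'a::semiring_1^'n^'n"
  assumes "A ** B = mat 1" and "B ** A = mat 1"
  shows "matrix_inv A = B"
proof -
  have "A ** matrix_inv A = mat 1 \<and> matrix_inv A ** A = mat 1"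
    unfolding matrix_inv_def by (rule someI[of _ B]) (use assms in auto)
  then show ?thesis
    by (metis assms(1) matrix_mul_assoc matrix_mul_lid matrix_mul_rid)
qed

lemma matrix_inv_pos_diag:
  fixes A :: "real^'n^'n"
  assumes "is_pos_diag A"
  shows "matrix_inv A = diagm (\<chi> a. inverse (A$a$a))"
proof (rule matrix_inv_unique)
  have offdiag: "\<forall>a b. a \<noteq> b \<longrightarrow> A$a$b = 0" and nz: "\<And>a. A$a$a \<noteq> 0"
    using assms unfolding is_pos_diag_def by (auto simp: less_le)
  show "A ** diagm (\<chi> a. inverse (A$a$a)) = mat 1"
    by (simp add: vec_eq_iff matrix_mul_diag_left_nth[OF offdiag] diagm_def mat_def nz)
  show "diagm (\<chi> a. inverse (A$a$a)) ** A = mat 1"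
    by (simp add: vec_eq_iff matrix_mul_diag_left_nth diagm_def mat_def nz offdiag)
qed

lemma kron_mat1_nth:
  "kron (A::real^'n^'k) (mat 1 :: real^'m^'m) $ p $ q = (if snd p = snd q then A $ fst p $ fst q else 0)"
  by (simp add: kron_def mat_def)

lemma congruence_offdiag_nonpos:
  fixes D :: "real^'n^'p" and W :: "real^'p^'p"
  assumes "\<forall>p q. p \<noteq> q \<longrightarrow> W$p$q = 0" and "\<forall>p. W$p$p \<ge> 0"
    and "\<forall>p. D$p$a * D$p$b \<le> 0"
  shows "(transpose D ** W ** D)$a$b \<le> 0"
proof -
  have "(transpose D ** W)$a$p = D$p$a * W$p$p" for p
  proof -
    have "(transpose D ** W)$a$p = (\<Sum>q\<in>UNIV. D$q$a * W$q$p)"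
      by (simp add: matrix_matrix_mult_def transpose_def)
    also have "\<dots> = (\<Sum>q\<in>UNIV. if q = p then D$p$a * W$p$p else 0)"
      by (rule sum.cong) (use assms(1) in auto)
    finally show ?thesis by simp
  qed
  then have "(transpose D ** W ** D)$a$b = (\<Sum>p\<in>UNIV. (D$p$a * D$p$b) * W$p$p)"
    by (simp add: matrix_matrix_mult_def[of "transpose D ** W"] algebra_simps)
  also have "\<dots> \<le> 0"
    using assms(2,3) by (intro sum_nonpos) (simp add: mult_nonpos_nonneg)
  finally show ?thesis .
qed

lemma matrix_vector_mult_nth_le_diag:
  fixes L :: "real^'n^'n" and y :: "real^'n"
  assumes "\<forall>b. b \<noteq> a \<longrightarrow> L$a$b \<le> 0" and "\<forall>b. y$b \<ge> 0"
  shows "(L *v y)$a \<le> L$a$a * y$a"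
proof -
  have "(L *v y)$a = (\<Sum>b\<in>UNIV. L$a$b * y$b)" by (simp add: matrix_vector_mult_def)
  also have "\<dots> \<le> (\<Sum>b\<in>UNIV. if b = a then L$a$a * y$a else 0)"
    by (rule sum_mono) (use assms in \<open>auto simp: mult_nonpos_nonneg\<close>)
  finally show ?thesis by simp
qed

lemma signed_pair_mult_nonpos:
  fixes x :: "'a \<Rightarrow> real"
  assumes "x s = 1" and "x p = -1" and "\<forall>r. r \<noteq> s \<and> r \<noteq> p \<longrightarrow> x r = 0" and "a \<noteq> b"
  shows "x a * x b \<le> 0"
  using assms by (cases "a = s"; cases "a = p"; cases "b = s"; cases "b = p") auto

lemma incidence_cols_mult_nonpos:
  assumes "is_incidence_cols B" and "a \<noteq> b"
  shows "B$a$j * B$b$j \<le> 0"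
proof -
  obtain s p where "B$s$j = 1" "B$p$j = -1" "\<forall>r. r \<noteq> s \<and> r \<noteq> p \<longrightarrow> B$r$j = 0"
    using assms(1) unfolding is_incidence_cols_def by blast
  then show ?thesis using signed_pair_mult_nonpos[of "\<lambda>r. B$r$j"] assms(2) by blast
qed

lemma kron_skeleton_incidence_mult_nonpos:
  fixes d :: "real^'v^'e"
  assumes "is_skeleton_incidence d" and "a \<noteq> b"
  shows "kron d (mat 1 :: real^'m^'m) $ p $ a * kron d (mat 1 :: real^'m^'m) $ p $ b \<le> 0"
proof (cases "snd a = snd b")
  case True
  with assms(2) have "fst a \<noteq> fst b" by (simp add: prod_eq_iff)
  moreover obtain u w where "d$fst p$u = 1" "d$fst p$w = -1"
    "\<forall>v. v \<noteq> u \<and> v \<noteq> w \<longrightarrow> d$fst p$v = 0"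
    using assms(1) unfolding is_skeleton_incidence_def by blast
  ultimately have "d$fst p$fst a * d$fst p$fst b \<le> 0"
    using signed_pair_mult_nonpos[of "\<lambda>v. d$fst p$v"] by blast
  then show ?thesis by (auto simp: kron_mat1_nth)
qed (auto simp: kron_mat1_nth)

definition diffusion_matrix ::
  "real^'v^'e \<Rightarrow> real^'v^'v \<Rightarrow> real^'e^'e \<Rightarrow> real^('e::finite \<times> 'm::finite)^('e \<times> 'm)
   \<Rightarrow> real^('v::finite \<times> 'm)^('v \<times> 'm)" where
  "diffusion_matrix d star0 star1 R = kron (matrix_inv star0) (mat 1 :: real^'m^'m) ** Delta_d d star1 R"

lemma diffusion_matrix_offdiag_nonpos:
  fixes d :: "real^'v::finite^'e::finite" and R :: "real^('e \<times> 'm::finite)^('e \<times> 'm)"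
  assumes d_inc: "is_skeleton_incidence d" and star0: "is_pos_diag star0"
    and star1: "is_pos_diag star1"
    and R_diag: "\<forall>p q. p \<noteq> q \<longrightarrow> R$p$q = 0" and R_nonneg: "\<forall>p. R$p$p \<ge> 0"
    and "b \<noteq> k"
  shows "diffusion_matrix d star0 star1 R $ k $ b \<le> 0"
proof -
  define Dt where "Dt = kron d (mat 1 :: real^'m^'m)"
  define W where "W = kron star1 (mat 1 :: real^'m^'m) ** R"
  have inv_star0: "kron (matrix_inv star0) (mat 1 :: real^'m^'m) =
      diagm (\<chi> p. inverse (star0 $ fst p $ fst p))"
    by (simp add: matrix_inv_pos_diag[OF star0] vec_eq_iff kron_mat1_nth diagm_def prod_eq_iff)
  have star1_diag: "\<forall>p q. p \<noteq> q \<longrightarrow> kron star1 (mat 1 :: real^'m^'m) $ p $ q = 0"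
    using star1 by (auto simp: is_pos_diag_def kron_mat1_nth prod_eq_iff)
  have W_diag: "\<forall>p q. p \<noteq> q \<longrightarrow> W$p$q = 0"
    using R_diag by (simp add: W_def matrix_mul_diag_left_nth[OF star1_diag])
  have W_nonneg: "\<forall>p. W$p$p \<ge> 0"
    using star1 R_nonneg
    by (simp add: W_def matrix_mul_diag_left_nth[OF star1_diag] kron_mat1_nth is_pos_diag_def less_imp_le)
  have "(transpose Dt ** W ** Dt)$k$b \<le> 0"
    using W_diag W_nonneg kron_skeleton_incidence_mult_nonpos[OF d_inc \<open>b \<noteq> k\<close>]
    by (intro congruence_offdiag_nonpos) (auto simp: Dt_def mult.commute)
  moreover have "inverse (star0 $ fst k $ fst k) \<ge> 0"
    using star0 by (simp add: is_pos_diag_def less_imp_le)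
  moreover have "diffusion_matrix d star0 star1 R $ k $ b =
      inverse (star0 $ fst k $ fst k) * (transpose Dt ** W ** Dt)$k$b"
    unfolding diffusion_matrix_def Delta_d_def inv_star0
    by (subst matrix_mul_diag_left_nth)
       (simp_all add: diagm_def Dt_def W_def matrix_mul_assoc)
  ultimately show ?thesis
    by (simp add: mult_nonneg_nonpos)
qed

lemma prod_power_extract_factor:
  fixes f :: "'a \<Rightarrow> 'b::comm_monoid_mult"
  assumes "finite A" and "i \<in> A" and "n i \<ge> 1"
  shows "(\<Prod>l\<in>A. f l ^ n l) = f i * (\<Prod>l\<in>A. f l ^ (n l - (if l = i then 1 else 0)))"
proof -
  have "f i ^ n i = f i * f i ^ (n i - 1)"
    using assms(3) by (simp add: power_eq_if)
  moreover have "(\<Prod>l\<in>A-{i}. f l ^ (n l - (if l = i then 1 else 0))) = (\<Prod>l\<in>A-{i}. f l ^ n l)"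
    by (rule prod.cong) auto
  ultimately show ?thesis
    using assms(1,2) by (simp add: prod.remove mult.assoc)
qed

lemma monomials_extract_factor:
  "real (Z$i$\<sigma>) * monomials Z xs x $ \<sigma> =
     real (Z$i$\<sigma>) * (x$i / xs$i) * (\<Prod>l\<in>UNIV. (x$l / xs$l) ^ (Z$l$\<sigma> - (if l = i then 1 else 0)))"
proof (cases "Z$i$\<sigma> = 0")
  case False
  then show ?thesis
    by (simp add: monomials_def prod_power_extract_factor[where n = "\<lambda>l. Z$l$\<sigma>" and i = i])
qed simp

text \<open>The terms of -f_i(x) coming from the diagonal of B K B^T, divided by x_i. The truncated
  exponent Z_i\<sigma> - 1 is harmless: where Z_i\<sigma> = 0 the whole term vanishes.\<close>

definition depletion_rate ::
  "nat^'c::finite^'m::finite \<Rightarrow> real^'r^'c \<Rightarrow> real^'r \<Rightarrow> real^'m \<Rightarrow> 'm \<Rightarrow> real^'m \<Rightarrow> real" where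
  "depletion_rate Z B \<kappa> xs i x = (\<Sum>\<sigma>\<in>UNIV. (B ** diagm \<kappa> ** transpose B)$\<sigma>$\<sigma> * real (Z$i$\<sigma>) / xs$i *
      (\<Prod>l\<in>UNIV. (x$l / xs$l) ^ (Z$l$\<sigma> - (if l = i then 1 else 0))))"

lemma reaction_field_ge_depletion:
  fixes Z :: "nat^'c^'m" and B :: "real^'r^'c" and \<kappa> :: "real^'r" and xs x :: "real^'m"
  assumes B_inc: "is_incidence_cols B" and kappa_pos: "\<forall>j. \<kappa>$j > 0"
    and xs_pos: "\<forall>i. xs$i > 0" and x_nonneg: "\<forall>l. x$l \<ge> 0"
  shows "reaction_field Z B \<kappa> xs x $ i \<ge> - (x$i * depletion_rate Z B \<kappa> xs i x)"
proof -
  define L where "L = B ** diagm \<kappa> ** transpose B"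
  define \<Phi> where "\<Phi> = monomials Z xs x"
  have L_offdiag: "\<forall>b. b \<noteq> a \<longrightarrow> L$a$b \<le> 0" for a
  proof (intro allI impI)
    fix b assume "b \<noteq> a"
    then have "(transpose (transpose B) ** diagm \<kappa> ** transpose B)$a$b \<le> 0"
      using kappa_pos incidence_cols_mult_nonpos[OF B_inc]
      by (intro congruence_offdiag_nonpos) (auto simp: diagm_def transpose_def less_imp_le)
    then show "L$a$b \<le> 0" by (simp add: L_def)
  qed
  have \<Phi>_nonneg: "\<forall>b. \<Phi>$b \<ge> 0"
    using x_nonneg xs_pos by (simp add: \<Phi>_def monomials_def prod_nonneg less_imp_le)
  have "reaction_field Z B \<kappa> xs x = - (realmat Z *v (L *v \<Phi>))"
    by (simp add: reaction_field_def L_def \<Phi>_def matrix_vector_mul_assoc matrix_mul_assoc)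
  then have "- reaction_field Z B \<kappa> xs x $ i = (\<Sum>\<sigma>\<in>UNIV. real (Z$i$\<sigma>) * (L *v \<Phi>)$\<sigma>)"
    by (simp add: matrix_vector_mult_def realmat_def)
  also have "\<dots> \<le> (\<Sum>\<sigma>\<in>UNIV. L$\<sigma>$\<sigma> * (real (Z$i$\<sigma>) * \<Phi>$\<sigma>))"
  proof (rule sum_mono)
    fix \<sigma>
    have "real (Z$i$\<sigma>) * (L *v \<Phi>)$\<sigma> \<le> real (Z$i$\<sigma>) * (L$\<sigma>$\<sigma> * \<Phi>$\<sigma>)"
      by (intro mult_left_mono matrix_vector_mult_nth_le_diag[OF L_offdiag \<Phi>_nonneg]) simp
    then show "real (Z$i$\<sigma>) * (L *v \<Phi>)$\<sigma> \<le> L$\<sigma>$\<sigma> * (real (Z$i$\<sigma>) * \<Phi>$\<sigma>)"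
      by (simp add: algebra_simps)
  qed
  also have "\<dots> = x$i * depletion_rate Z B \<kappa> xs i x"
    unfolding \<Phi>_def monomials_extract_factor depletion_rate_def sum_distrib_left L_def
    by (rule sum.cong) (simp_all add: field_simps)
  finally show ?thesis by simp
qed

definition loss_rate ::
  "nat^'c::finite^'m::finite \<Rightarrow> real^'r^'c \<Rightarrow> real^'r \<Rightarrow> real^'m \<Rightarrow> real^'v^'e \<Rightarrow> real^'v^'v
   \<Rightarrow> real^'e^'e \<Rightarrow> real^('e::finite \<times> 'm)^('e \<times> 'm) \<Rightarrow> real^('v::finite \<times> 'm) \<Rightarrow> 'v \<times> 'm \<Rightarrow> real" where
  "loss_rate Z B \<kappa> xs d star0 star1 R Y k =
     diffusion_matrix d star0 star1 R $ k $ k / xs $ snd k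
     + depletion_rate Z B \<kappa> xs (snd k) (compartment Y (fst k))"

lemma F_star_nth_ge_loss:
  assumes B_inc: "is_incidence_cols B" and kappa_pos: "\<forall>j. \<kappa>$j > 0"
    and xs_pos: "\<forall>i. xs$i > 0" and d_inc: "is_skeleton_incidence d"
    and star0: "is_pos_diag star0" and star1: "is_pos_diag star1"
    and R_diag: "\<forall>p q. p \<noteq> q \<longrightarrow> Rd Y $ p $ q = 0" and R_nonneg: "\<forall>p. Rd Y $ p $ p \<ge> 0"
    and Y_nonneg: "\<forall>p. Y$p \<ge> 0"
  shows "F_star Z B \<kappa> xs d star0 star1 Rd Y $ k \<ge> - loss_rate Z B \<kappa> xs d star0 star1 (Rd Y) Y k * Y$k"
proof -
  obtain v i where k: "k = (v, i)" by (cases k)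
  define M where "M = diffusion_matrix d star0 star1 (Rd Y)"
  have "(M *v quot_star Y xs)$k \<le> M$k$k * (Y$k / xs$i)"
    using matrix_vector_mult_nth_le_diag[of k M "quot_star Y xs"] Y_nonneg xs_pos
      diffusion_matrix_offdiag_nonpos[OF d_inc star0 star1 R_diag R_nonneg]
    by (simp add: M_def quot_star_def k less_imp_le)
  moreover have "reaction_field Z B \<kappa> xs (compartment Y v) $ i
      \<ge> - (Y$k * depletion_rate Z B \<kappa> xs i (compartment Y v))"
    using reaction_field_ge_depletion[OF B_inc kappa_pos xs_pos, of "compartment Y v" i] Y_nonneg
    by (simp add: compartment_def k)
  moreover have "F_star Z B \<kappa> xs d star0 star1 Rd Y $ k =
      - (M *v quot_star Y xs)$k + reaction_field Z B \<kappa> xs (compartment Y v) $ i"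
    by (simp add: F_star_def big_F_def M_def diffusion_matrix_def k)
  ultimately show ?thesis
    by (simp add: loss_rate_def M_def k algebra_simps)
qed

lemma continuous_on_matrix_mult [continuous_intros]:
  fixes A :: "'a::topological_space \<Rightarrow> real^'n^'m" and C :: "'a \<Rightarrow> real^'k^'n"
  assumes "continuous_on T A" and "continuous_on T C"
  shows "continuous_on T (\<lambda>t. A t ** C t)"
  unfolding matrix_matrix_mult_def using assms by (intro continuous_intros)

lemma continuous_on_loss_rate:
  assumes "continuous_on T R" and "continuous_on T Y" and "\<forall>i. xs$i \<noteq> 0"
  shows "continuous_on T (\<lambda>t. loss_rate Z B \<kappa> xs d star0 star1 (R t) (Y t) k)"
  unfolding loss_rate_def diffusion_matrix_def Delta_d_def depletion_rate_def compartment_def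
  using assms by (intro continuous_intros) auto

lemma exp_weighted_mono_of_deriv_ge:
  fixes y y' :: "real \<Rightarrow> real"
  assumes "a \<le> b"
    and deriv: "\<And>t. t \<in> {a..b} \<Longrightarrow> (y has_real_derivative y' t) (at t within {a..b})"
    and growth: "\<And>t. t \<in> {a..b} \<Longrightarrow> y' t \<ge> - C * y t"
  shows "y a * exp (C * a) \<le> y b * exp (C * b)"
proof -
  define h where "h t = y t * exp (C * t)" for t
  define h' where "h' t = exp (C * t) * (y' t + C * y t)" for t
  have "(h has_real_derivative h' t) (at t within {a..b})" if "t \<in> {a..b}" for t
    unfolding h_def[abs_def] h'_def
    by (rule derivative_eq_intros deriv[OF that] | simp add: algebra_simps)+
  then obtain \<xi> where "\<xi> \<in> {a..b}" "h b - h a = h' \<xi> * (b - a)"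
    using mvt_very_simple[OF \<open>a \<le> b\<close>, of h "\<lambda>t u. h' t * u"]
    by (auto simp: has_field_derivative_def mult_commute_abs)
  moreover have "h' \<xi> \<ge> 0"
    using growth[OF \<open>\<xi> \<in> {a..b}\<close>] by (simp add: h'_def)
  ultimately have "h a \<le> h b"
    using \<open>a \<le> b\<close> by (metis diff_ge_0_iff_ge mult_nonneg_nonneg)
  then show ?thesis by (simp add: h_def)
qed

lemma pos_persists_of_deriv_ge:
  fixes y y' c :: "real \<Rightarrow> real"
  assumes "a \<le> b"
    and deriv: "\<And>t. t \<in> {a..b} \<Longrightarrow> (y has_real_derivative y' t) (at t within {a..b})"
    and "continuous_on {a..b} c"
    and nonneg: "\<And>t. t \<in> {a..b} \<Longrightarrow> y t \<ge> 0"
    and growth: "\<And>t. t \<in> {a..b} \<Longrightarrow> y' t \<ge> - c t * y t"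
    and "y a > 0"
  shows "y b > 0"
proof -
  obtain t\<^sub>0 where "\<forall>t\<in>{a..b}. c t \<le> c t\<^sub>0"
    using continuous_attains_sup[OF compact_Icc _ assms(3)] assms(1) by auto
  then obtain C where C: "\<And>t. t \<in> {a..b} \<Longrightarrow> c t \<le> C" by blast
  have "y' t \<ge> - C * y t" if "t \<in> {a..b}" for t
  proof -
    have "(C - c t) * y t \<ge> 0" using C[OF that] nonneg[OF that] by simp
    then show ?thesis using growth[OF that] by (simp add: algebra_simps)
  qed
  then have "y a * exp (C * a) \<le> y b * exp (C * b)"
    using exp_weighted_mono_of_deriv_ge[OF \<open>a \<le> b\<close> deriv] by blast
  moreover have "y a * exp (C * a) > 0" using \<open>y a > 0\<close> by simp
  ultimately have "y b * exp (C * b) > 0" by linarith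
  then show ?thesis by (simp add: zero_less_mult_iff)
qed

theorem lemma5:
  fixes Z :: "nat^'c^'m" and B :: "real^'r^'c" and \<kappa> :: "real^'r" and xs :: "real^'m"
    and d :: "real^'v^'e" and star0 :: "real^'v^'v" and star1 :: "real^'e^'e"
    and Rd :: "real^('v \<times> 'm) \<Rightarrow> real^('e \<times> 'm)^('e \<times> 'm)"
    and \<alpha> :: real and S :: "(real^('v \<times> 'm)) set"
    and X :: "real \<Rightarrow> real^('v \<times> 'm)" and tstar :: real
  assumes B_inc: "is_incidence_cols B"
    and xs_pos: "\<forall>i. xs$i > 0"
    and kappa_pos: "\<forall>j. \<kappa>$j > 0"
    and d_inc: "is_skeleton_incidence d"
    and star0_pos: "is_pos_diag star0"
    and star1_pos: "is_pos_diag star1"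
    and alpha_pos: "\<alpha> > 0"
    and S_open: "open S" and S_orth: "nonneg_orthant \<subseteq> S"
    and Rd_C1: "\<exists>Rd' :: real^('v \<times> 'm) \<Rightarrow> ((real^('v \<times> 'm)) \<Rightarrow>\<^sub>L (real^('e \<times> 'm)^('e \<times> 'm))).
                  (\<forall>Y\<in>S. (Rd has_derivative blinfun_apply (Rd' Y)) (at Y)) \<and> continuous_on S Rd'"
    and Rd_diag: "\<forall>Y\<in>nonneg_orthant. \<forall>p q. p \<noteq> q \<longrightarrow> Rd Y $ p $ q = 0"
    and Rd_ge: "\<forall>Y\<in>nonneg_orthant. \<forall>p. Rd Y $ p $ p \<ge> \<alpha>"
    and tstar_nonneg: "0 \<le> tstar"
    and X_orth: "\<forall>t\<in>{0..tstar}. X t \<in> nonneg_orthant"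
    and X_sol: "\<forall>t\<in>{0..tstar}.
                  (X has_vector_derivative F_star Z B \<kappa> xs d star0 star1 Rd (X t)) (at t within {0..tstar})"
  shows "\<forall>k. X 0 $ k > 0 \<longrightarrow> X tstar $ k > 0"
proof (intro allI impI)
  fix k assume "X 0 $ k > 0"
  obtain Rd' where "\<forall>Y\<in>S. (Rd has_derivative blinfun_apply (Rd' Y)) (at Y)"
    using Rd_C1 by blast
  then have "continuous_on S Rd"
    by (meson continuous_at_imp_continuous_on has_derivative_continuous)
  moreover have X_cont: "continuous_on {0..tstar} X"
    using X_sol by (auto intro: continuous_on_vector_derivative)
  ultimately have "continuous_on {0..tstar} (\<lambda>t. Rd (X t))"
    by (rule continuous_on_compose2) (use X_orth S_orth in auto)
  then have rate_cont: "continuous_on {0..tstar} (\<lambda>t. loss_rate Z B \<kappa> xs d star0 star1 (Rd (X t)) (X t) k)"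
    using X_cont xs_pos by (intro continuous_on_loss_rate) (auto simp: less_le)
  show "X tstar $ k > 0"
  proof (rule pos_persists_of_deriv_ge[OF tstar_nonneg _ rate_cont])
    fix t assume t: "t \<in> {0..tstar}"
    then have X_t: "\<forall>p. X t $ p \<ge> 0"
      using X_orth by (simp add: nonneg_orthant_def)
    show "((\<lambda>t. X t $ k) has_real_derivative F_star Z B \<kappa> xs d star0 star1 Rd (X t) $ k)
        (at t within {0..tstar})"
      using bounded_linear.has_vector_derivative[OF bounded_linear_vec_nth X_sol[rule_format, OF t]]
      by (simp add: has_real_derivative_iff_has_vector_derivative)
    show "X t $ k \<ge> 0" using X_t by blast
    show "F_star Z B \<kappa> xs d star0 star1 Rd (X t) $ k
        \<ge> - loss_rate Z B \<kappa> xs d star0 star1 (Rd (X t)) (X t) k * X t $ k"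
      using X_orth Rd_diag Rd_ge alpha_pos t X_t
      by (intro F_star_nth_ge_loss[OF B_inc kappa_pos xs_pos d_inc star0_pos star1_pos])
         (auto intro: order_trans[OF less_imp_le])
  qed fact
qed

end
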